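(* For any $(Q,P)\in\mathfrak{U}_-\times\mathfrak{U}_-^*$ there exists a unique $B'\in\mathfrak{b}_k^*$ such that $B'|_{\mathfrak{U}_-^*}=P$ and the $\mathfrak{b}_k^*$-part of $B'(1_{\mathbb{C}^n}+Q)$ minus $dT$ lies in $\mathfrak{U}_-^*$.
   Context: Let $\mathfrak{g}=\mathfrak{gl}_n(\mathbb{C})$, $\mathfrak{t}$ a Cartan subalgebra, $k>1$, $T=\sum_{i=1}^{k-1}T_iz^{-i}$, $T_i\in\mathfrak{t}$, $T_{k-1}\ne0$, $dT=\sum_i(-iT_i)z^{-i-1}dz$. $\mathfrak{b}_k^*=\{\sum_{i=1}^{k-1}X_iz^{-i-1}dz:X_i\in\mathfrak{g}\}$; for a $\mathfrak{gl}_n$-valued Laurent expression times $dz$, its $\mathfrak{b}_k^*$-part means its terms in degrees $z^{-i-1}dz$, $1\le i\le k-1$. For $i=0,\dots,k-2$ let $\mathbb{C}^n=\bigoplus_{p\in J_i}V^{(i)}_p$ be the decomposition into simultaneous eigenspaces of $(T_{i+1},\dots,T_{k-1})$, $\pi_i:J_j\to J_i$ natural; fix total orders on the $J_i$ with $\pi_{i+1}(p)<\pi_{i+1}(q)\Rightarrow p<q$. $\mathfrak{p}_i^-=\bigoplus_{p\le q}\mathrm{Hom}(V^{(i)}_p,V^{(i)}_q)$, $\mathfrak{u}_i^\pm=\bigoplus_{p\gtrless q}\mathrm{Hom}(V^{(i)}_p,V^{(i)}_q)$, with $\mathfrak{p}_{k-1}^-=\mathfrak{g}$, $\mathfrak{u}^\pm_{k-1}=0$.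 $\mathfrak{U}_-=\{\sum_{i=1}^{k-1}Q_iz^i:Q_i\in\mathfrak{u}_i^-\}$, $\mathfrak{U}_-^*=\{\sum_{i=1}^{k-1}P_iz^{-i-1}dz:P_i\in\mathfrak{u}_i^+\}$, and for $B'=\sum B'_iz^{-i-1}dz\in\mathfrak{b}_k^*$, $B'|_{\mathfrak{U}_-^*}=\sum_i(\text{the }\mathfrak{u}_i^+\text{-component of }B'_i\text{ w.r.t. }\mathfrak{g}=\mathfrak{u}_i^+\oplus\mathfrak{p}_i^-)z^{-i-1}dz$. *)

theory Defs
  imports "HOL-Analysis.Analysis"
begin

text \<open>Matrices in gl_n(C) are complex^'n^'n (rows indexed first). The coefficients
T_1..T_{k-1} are given as a function T :: nat => matrix (values outside 1..k-1 unused).\<close>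

definition is_diag :: "complex^'n^'n \<Rightarrow> bool" where
  "is_diag M \<longleftrightarrow> (\<forall>a b. a \<noteq> b \<longrightarrow> M $ a $ b = 0)"

text \<open>Simultaneous eigenvalue tuple of the basis vector e_a for (T_{i+1},...,T_{k-1}),
encoded as a function on indices l, zero outside i < l < k. Elements of J_i.\<close>
definition ev :: "(nat \<Rightarrow> complex^'n^'n) \<Rightarrow> nat \<Rightarrow> nat \<Rightarrow> 'n \<Rightarrow> (nat \<Rightarrow> complex)" where
  "ev T k i a = (\<lambda>l. if i < l \<and> l < k then T l $ a $ a else 0)"

definition J :: "(nat \<Rightarrow> complex^'n^'n) \<Rightarrow> nat \<Rightarrow> nat \<Rightarrow> (nat \<Rightarrow> complex) set" where
  "J T k i = range (ev T k i)"

definition proj :: "nat \<Rightarrow> (nat \<Rightarrow> complex) \<Rightarrow> (nat \<Rightarrow> complex)" where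
  "proj i p = (\<lambda>l. if i < l then p l else 0)"

definition sless :: "('x \<times> 'x) set \<Rightarrow> 'x \<Rightarrow> 'x \<Rightarrow> bool" where
  "sless R p q \<longleftrightarrow> (p, q) \<in> R \<and> p \<noteq> q"

text \<open>u_i^+ = sum over p>q of Hom(V_p,V_q): entry (row a, column b) allowed iff
class(row) < class(column). u_i^- : class(column) < class(row).\<close>
definition in_uplus :: "(nat \<Rightarrow> complex^'n^'n) \<Rightarrow> nat \<Rightarrow> (nat \<Rightarrow> ((nat \<Rightarrow> complex) \<times> (nat \<Rightarrow> complex)) set)
    \<Rightarrow> nat \<Rightarrow> complex^'n^'n \<Rightarrow> bool" where
  "in_uplus T k R i X \<longleftrightarrow>
     (\<forall>a b. X $ a $ b \<noteq> 0 \<longrightarrow> sless (R i) (ev T k i a) (ev T k i b))"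

definition in_uminus :: "(nat \<Rightarrow> complex^'n^'n) \<Rightarrow> nat \<Rightarrow> (nat \<Rightarrow> ((nat \<Rightarrow> complex) \<times> (nat \<Rightarrow> complex)) set)
    \<Rightarrow> nat \<Rightarrow> complex^'n^'n \<Rightarrow> bool" where
  "in_uminus T k R i X \<longleftrightarrow>
     (\<forall>a b. X $ a $ b \<noteq> 0 \<longrightarrow> sless (R i) (ev T k i b) (ev T k i a))"

text \<open>u_i^+-component w.r.t. g = u_i^+ (+) p_i^- (block entries with class(row) < class(col))\<close>
definition uplus_comp :: "(nat \<Rightarrow> complex^'n^'n) \<Rightarrow> nat \<Rightarrow> (nat \<Rightarrow> ((nat \<Rightarrow> complex) \<times> (nat \<Rightarrow> complex)) set)
    \<Rightarrow> nat \<Rightarrow> complex^'n^'n \<Rightarrow> complex^'n^'n" where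
  "uplus_comp T k R i X =
     (\<chi> a b. if sless (R i) (ev T k i a) (ev T k i b) then X $ a $ b else 0)"

text \<open>Coefficient of z^{-m-1}dz in B'(1+Q), where B' = sum_{i=1}^{k-1} B_i z^{-i-1}dz and
1+Q = sum_{j=0}^{k-1} Qhat_j z^j with Qhat_0 = identity, Qhat_j = Q_j.\<close>
definition prod_coeff :: "nat \<Rightarrow> (nat \<Rightarrow> complex^'n^'n) \<Rightarrow> (nat \<Rightarrow> complex^'n^'n) \<Rightarrow> nat \<Rightarrow> complex^'n^'n" where
  "prod_coeff k B Q m =
     (\<Sum>i\<in>{1..k-1}. \<Sum>j\<in>{0..k-1}.
        if i = m + j then B i ** (if j = 0 then mat 1 else Q j) else 0)"

text \<open>Coefficient of z^{-m-1}dz in dT: -m T_m.\<close>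
definition dT_coeff :: "(nat \<Rightarrow> complex^'n^'n) \<Rightarrow> nat \<Rightarrow> complex^'n^'n" where
  "dT_coeff T m = (\<chi> a b. - of_nat m * T m $ a $ b)"

end

theory Submission
  imports Defs
begin

text \<open>Since 1 + Q starts with the identity, the coefficient of z^{-m-1}dz in B'(1+Q) is B'_m
  plus terms involving only the higher coefficients B'_{m+j}, j \<ge> 1. Given those, the
  condition in degree m fixes the p_m^- part of B'_m, and B'|_{U_-^*} = P fixes its u_m^+ part;
  so B' is determined by downward recursion from m = k-1.\<close>

definition uplus_lift :: "(nat \<Rightarrow> complex^'n^'n) \<Rightarrow> nat \<Rightarrow> (nat \<Rightarrow> ((nat \<Rightarrow> complex) \<times> (nat \<Rightarrow> complex)) set)
    \<Rightarrow> nat \<Rightarrow> complex^'n^'n \<Rightarrow> complex^'n^'n \<Rightarrow> complex^'n^'n" where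
  "uplus_lift T k R i P C = (\<chi> a b. if sless (R i) (ev T k i a) (ev T k i b) then P $ a $ b else - C $ a $ b)"

lemma uplus_comp_eq_and_in_uplus_iff:
  assumes "in_uplus T k R i P"
  shows "uplus_comp T k R i X = P \<and> in_uplus T k R i (X + C) \<longleftrightarrow> X = uplus_lift T k R i P C"
proof -
  let ?S = "\<lambda>a b. sless (R i) (ev T k i a) (ev T k i b)"
  have P0: "\<not> ?S a b \<Longrightarrow> P $ a $ b = 0" for a b
    using assms unfolding in_uplus_def by blast
  have "uplus_comp T k R i X = P \<longleftrightarrow> (\<forall>a b. ?S a b \<longrightarrow> X $ a $ b = P $ a $ b)"
    unfolding uplus_comp_def vec_eq_iff using P0 by (auto split: if_splits)
  moreover have "in_uplus T k R i (X + C) \<longleftrightarrow> (\<forall>a b. \<not> ?S a b \<longrightarrow> X $ a $ b = - C $ a $ b)"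
    unfolding in_uplus_def by (auto simp: eq_neg_iff_add_eq_0)
  ultimately show ?thesis
    unfolding uplus_lift_def vec_eq_iff by auto
qed

lemma prod_coeff_eq_leading_plus_higher:
  assumes "\<forall>i. i \<notin> {1..k-1} \<longrightarrow> B i = 0" and "m \<in> {1..k-1}"
  shows "prod_coeff k B Q m = B m + (\<Sum>j\<in>{1..k-1}. B (m+j) ** Q j)"
proof -
  let ?Q1 = "\<lambda>j. if j = 0 then mat 1 else Q j"
  have "prod_coeff k B Q m = (\<Sum>j\<in>{0..k-1}. \<Sum>i\<in>{1..k-1}. if i = m + j then B i ** ?Q1 j else 0)"
    unfolding prod_coeff_def by (rule sum.swap)
  also have "\<dots> = (\<Sum>j\<in>{0..k-1}. B (m+j) ** ?Q1 j)"
    using assms(1) by (intro sum.cong) (auto simp: sum.delta)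
  also have "\<dots> = B m + (\<Sum>j\<in>{Suc 0..k-1}. B (m+j) ** ?Q1 j)"
    by (subst sum.atLeast_Suc_atMost) simp_all
  also have "(\<Sum>j\<in>{Suc 0..k-1}. B (m+j) ** ?Q1 j) = (\<Sum>j\<in>{1..k-1}. B (m+j) ** Q j)"
    by (rule sum.cong) auto
  finally show ?thesis .
qed

function coeff_solution :: "(nat \<Rightarrow> complex^'n^'n) \<Rightarrow> nat \<Rightarrow> (nat \<Rightarrow> ((nat \<Rightarrow> complex) \<times> (nat \<Rightarrow> complex)) set)
    \<Rightarrow> (nat \<Rightarrow> complex^'n^'n) \<Rightarrow> (nat \<Rightarrow> complex^'n^'n) \<Rightarrow> nat \<Rightarrow> complex^'n^'n" where
  "coeff_solution T k R P Q m =
     (if m \<in> {1..k-1} then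
        uplus_lift T k R m (P m) ((\<Sum>j\<in>{1..k-1}. coeff_solution T k R P Q (m+j) ** Q j) - dT_coeff T m)
      else 0)"
  by pat_completeness auto
termination
  by (relation "Wellfounded.measure (\<lambda>(T, k, R, P, Q, m). k - m)") auto

declare coeff_solution.simps [simp del]

lemma conditions_iff_recursion:
  assumes "\<forall>i\<in>{1..k-1}. in_uplus T k R i (P i)"
    and "\<forall>i. i \<notin> {1..k-1} \<longrightarrow> B i = 0"
  shows "(\<forall>i\<in>{1..k-1}. uplus_comp T k R i (B i) = P i) \<and>
         (\<forall>m\<in>{1..k-1}. in_uplus T k R m (prod_coeff k B Q m - dT_coeff T m))
     \<longleftrightarrow> (\<forall>m\<in>{1..k-1}. B m = uplus_lift T k R m (P m) ((\<Sum>j\<in>{1..k-1}. B (m+j) ** Q j) - dT_coeff T m))"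
proof -
  have "prod_coeff k B Q m - dT_coeff T m = B m + ((\<Sum>j\<in>{1..k-1}. B (m+j) ** Q j) - dT_coeff T m)"
    if "m \<in> {1..k-1}" for m
    using prod_coeff_eq_leading_plus_higher[OF assms(2) that] by (simp add: add_diff_eq)
  then show ?thesis
    using uplus_comp_eq_and_in_uplus_iff assms(1) by (metis (no_types, lifting))
qed

lemma coeff_recursion_unique:
  assumes "\<forall>i. i \<notin> {1..k-1} \<longrightarrow> B i = 0" and "\<forall>i. i \<notin> {1..k-1} \<longrightarrow> B' i = 0"
    and "\<forall>m\<in>{1..k-1}. B m = uplus_lift T k R m (P m) ((\<Sum>j\<in>{1..k-1}. B (m+j) ** Q j) - dT_coeff T m)"
    and "\<forall>m\<in>{1..k-1}. B' m = uplus_lift T k R m (P m) ((\<Sum>j\<in>{1..k-1}. B' (m+j) ** Q j) - dT_coeff T m)"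
  shows "B = B'"
proof
  fix m
  show "B m = B' m"
  proof (induction m rule: measure_induct_rule[where f = "\<lambda>m. k - m"])
    case (less m)
    show ?case
    proof (cases "m \<in> {1..k-1}")
      case True
      then have "B (m+j) = B' (m+j)" if "j \<in> {1..k-1}" for j
        using less that by auto
      then have "(\<Sum>j\<in>{1..k-1}. B (m+j) ** Q j) = (\<Sum>j\<in>{1..k-1}. B' (m+j) ** Q j)"
        by (intro sum.cong) auto
      with True assms(3,4) show ?thesis by simp
    next
      case False
      with assms(1,2) show ?thesis by simp
    qed
  qed
qed

theorem lemma3p7:
  fixes T Q P :: "nat \<Rightarrow> complex^'n^'n"
    and k :: nat
    and R :: "nat \<Rightarrow> ((nat \<Rightarrow> complex) \<times> (nat \<Rightarrow> complex)) set"
  assumes "k > 1"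
    and "\<forall>i\<in>{1..k-1}. is_diag (T i)"
    and "T (k-1) \<noteq> 0"
    and "\<forall>i\<le>k-2. linear_order_on (J T k i) (R i)"
    and "\<forall>i<k-2. \<forall>p\<in>J T k i. \<forall>q\<in>J T k i.
           sless (R (i+1)) (proj (i+1) p) (proj (i+1) q) \<longrightarrow> sless (R i) p q"
    and "\<forall>i\<in>{1..k-1}. in_uminus T k R i (Q i)"
    and "\<forall>i\<in>{1..k-1}. in_uplus T k R i (P i)"
  shows "\<exists>!B :: nat \<Rightarrow> complex^'n^'n.
           (\<forall>i. i \<notin> {1..k-1} \<longrightarrow> B i = 0) \<and>
           (\<forall>i\<in>{1..k-1}. uplus_comp T k R i (B i) = P i) \<and>
           (\<forall>m\<in>{1..k-1}. in_uplus T k R m (prod_coeff k B Q m - dT_coeff T m))"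
proof (rule ex1I)
  let ?B = "coeff_solution T k R P Q"
  have zero: "\<forall>i. i \<notin> {1..k-1} \<longrightarrow> ?B i = 0"
    by (subst coeff_solution.simps) simp
  have rec: "\<forall>m\<in>{1..k-1}. ?B m = uplus_lift T k R m (P m) ((\<Sum>j\<in>{1..k-1}. ?B (m+j) ** Q j) - dT_coeff T m)"
    by (subst coeff_solution.simps) simp
  with zero conditions_iff_recursion[OF assms(7) zero]
  show "(\<forall>i. i \<notin> {1..k-1} \<longrightarrow> ?B i = 0) \<and>
      (\<forall>i\<in>{1..k-1}. uplus_comp T k R i (?B i) = P i) \<and>
      (\<forall>m\<in>{1..k-1}. in_uplus T k R m (prod_coeff k ?B Q m - dT_coeff T m))"
    by blast
  fix B
  assume "(\<forall>i. i \<notin> {1..k-1} \<longrightarrow> B i = 0) \<and>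
      (\<forall>i\<in>{1..k-1}. uplus_comp T k R i (B i) = P i) \<and>
      (\<forall>m\<in>{1..k-1}. in_uplus T k R m (prod_coeff k B Q m - dT_coeff T m))"
  with conditions_iff_recursion[OF assms(7), of B Q] coeff_recursion_unique[OF _ zero _ rec]
  show "B = ?B"
    by blast
qed
end
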